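(* Let $\ell\ge1$ and $n\ge2$ be integers and $N=n^\ell$. The EBS design of order $\ell$ on $N$ nodes guarantees throughput $\frac{1}{2\ell}$ and has maximum latency at most $2\ell(n-1)$. In particular, if $r\le\frac12$ is such that $\ell=\frac1{2r}$ is an integer and $N^{1/\ell}$ is an integer, the EBS design of order $\ell$ on $N$ nodes guarantees throughput $r$ and has maximum latency at most $\frac1r\left(N^{2r}-1\right)$.
   Context: General definitions. A connection schedule of size $N$ and period $T\ge1$ is a sequence of permutations $\pi_0,\dots,\pi_{T-1}$ of the node set; write $\pi_t=\pi_{t\bmod T}$ for $t\in\mathbb Z$. Its virtual topology $G$ is the directed graph on (nodes)$\times\mathbb Z$ with virtual edges $(i,t)\to(i,t+1)$ and physical edges $(i,t)\to(\pi_t(i),t+1)$. The latency of a path in $G$ is its number of edges; $\mathcal P(a,b,t)$ is the set of paths from $(a,t)$ to some $(b,t')$. A flow is $f:\mathcal P\to[0,\infty)$ on the set $\mathcal P$ of all paths, with load $F(f,e)=\sum_{P\ni e}f(P)$; it is feasible if $F(f,e)\le1$ for all physical edges $e$. An oblivious routing scheme assigns to each $(a,b,t)$ a flow $R_{a,b,t}$ supported on $\mathcal P(a,b,t)$ of total value 1, periodic in $t$ with period $T$ (shifting paths by $T$). Maximum latency is the largest latency of a path with positive weight in some $R_{a,b,t}$. A demand function $D$ gives for each $t\in\mathbb Z$ a nonnegative $N\times N$ matrix $D(t)$; it requests throughput $\sup_t$ of the maximum row or column sum of $D(t)$. The scheme guarantees throughput $r$ if $f(R,D)=\sum_{a,b,t}D(t,a,b)R_{a,b,t}$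 is feasible for every $D$ requesting throughput at most $r$. EBS (Elementary Basis Scheme) of order $\ell$: nodes are identified with $(\mathbb Z/n)^\ell$, $N=n^\ell$; $\mathbf e_p$ ($0\le p<\ell$) is the standard basis vector. The period is $T=\ell(n-1)$; for $0\le p<\ell$ and $1\le s\le n-1$, $\pi_{(n-1)p+s-1}(\mathbf i)=\mathbf i+s\mathbf e_p$. The semi-path from $(a,t)$ to $b$ is built greedily: at the current vertex $(x,t')$, stop if $x=b$; otherwise write $t'\bmod T=(n-1)p+s-1$ and, if $(b-x)_p=s$ in $\mathbb Z/n$, traverse the physical edge to $(x+s\mathbf e_p,t'+1)$, else the virtual edge to $(x,t'+1)$. For $c\in[N]$, the path from $(a,t)$ to $b$ via $c$ is: the semi-path from $(a,t)$ to $c$, then virtual edges up to $(c,t+T)$, then the semi-path from $(c,t+T)$ to $b$. The EBS routing scheme sets $R_{a,b,t}$ to give weight $1/N$ to the path via $c$ for each of the $N$ nodes $c$, and weight $0$ to all other paths. *)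

theory Defs
  imports "HOL-Analysis.Analysis"
begin

text \<open>A connection schedule on node set V is given by a function sch, where sch t is the
permutation used at time t (already extended periodically to all integers t).
A path in the virtual topology is represented as (start node, start time, list of edge
choices), where choice True = physical edge (i,t) -> (sch t i, t+1) and
False = virtual edge (i,t) -> (i,t+1).
A physical edge is identified by its source vertex (i,s), since each vertex has
exactly one outgoing physical edge.\<close>

type_synonym 'v path = "'v \<times> int \<times> bool list"

fun walk :: "(int \<Rightarrow> 'v \<Rightarrow> 'v) \<Rightarrow> 'v \<Rightarrow> int \<Rightarrow> bool list \<Rightarrow> 'v" where
  "walk sch x t [] = x"
| "walk sch x t (c # cs) = walk sch (if c then sch t x else x) (t + 1) cs"

definition latency :: "'v path \<Rightarrow> nat" where
  "latency P = length (snd (snd P))"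

definition uses_phys :: "(int \<Rightarrow> 'v \<Rightarrow> 'v) \<Rightarrow> 'v path \<Rightarrow> 'v \<times> int \<Rightarrow> bool" where
  "uses_phys sch P e = (case P of (a, t, cs) \<Rightarrow>
     (\<exists>k < length cs. cs ! k \<and> walk sch a t (take k cs) = fst e \<and> t + int k = snd e))"

definition route_paths :: "(int \<Rightarrow> 'v \<Rightarrow> 'v) \<Rightarrow> 'v \<Rightarrow> 'v \<Rightarrow> int \<Rightarrow> 'v path set" where
  "route_paths sch a b t = {(x, s, cs). x = a \<and> s = t \<and> walk sch a t cs = b}"

definition connection_schedule :: "'v set \<Rightarrow> nat \<Rightarrow> (int \<Rightarrow> 'v \<Rightarrow> 'v) \<Rightarrow> bool" where
  "connection_schedule V T sch \<longleftrightarrow> T \<ge> 1 \<and> (\<forall>t. bij_betw (sch t) V V)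
     \<and> (\<forall>t. sch (t + int T) = sch t)"

definition oblivious_routing_scheme ::
  "'v set \<Rightarrow> nat \<Rightarrow> (int \<Rightarrow> 'v \<Rightarrow> 'v) \<Rightarrow> ('v \<Rightarrow> 'v \<Rightarrow> int \<Rightarrow> 'v path \<Rightarrow> real) \<Rightarrow> bool" where
  "oblivious_routing_scheme V T sch R \<longleftrightarrow> connection_schedule V T sch \<and>
     (\<forall>a\<in>V. \<forall>b\<in>V. \<forall>t.
        (\<forall>P. R a b t P \<ge> 0)
      \<and> (\<forall>P. R a b t P \<noteq> 0 \<longrightarrow> P \<in> route_paths sch a b t)
      \<and> (\<Sum>\<^sub>\<infinity>P\<in>route_paths sch a b t. ennreal (R a b t P)) = 1
      \<and> (\<forall>x s cs. R a b (t + int T) (x, s + int T, cs) = R a b t (x, s, cs)))"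

definition max_latency_le ::
  "'v set \<Rightarrow> ('v \<Rightarrow> 'v \<Rightarrow> int \<Rightarrow> 'v path \<Rightarrow> real) \<Rightarrow> real \<Rightarrow> bool" where
  "max_latency_le V R L \<longleftrightarrow>
     (\<forall>a\<in>V. \<forall>b\<in>V. \<forall>t P. R a b t P > 0 \<longrightarrow> real (latency P) \<le> L)"

definition requests_at_most :: "'v set \<Rightarrow> (int \<Rightarrow> 'v \<Rightarrow> 'v \<Rightarrow> real) \<Rightarrow> real \<Rightarrow> bool" where
  "requests_at_most V D r \<longleftrightarrow>
     (\<forall>t. \<forall>a\<in>V. \<forall>b\<in>V. D t a b \<ge> 0)
   \<and> (\<forall>t. \<forall>a\<in>V. (\<Sum>b\<in>V. D t a b) \<le> r)
   \<and> (\<forall>t. \<forall>b\<in>V. (\<Sum>a\<in>V. D t a b) \<le> r)"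

definition flow_of :: "'v set \<Rightarrow> ('v \<Rightarrow> 'v \<Rightarrow> int \<Rightarrow> 'v path \<Rightarrow> real)
    \<Rightarrow> (int \<Rightarrow> 'v \<Rightarrow> 'v \<Rightarrow> real) \<Rightarrow> 'v path \<Rightarrow> ennreal" where
  "flow_of V R D P = (\<Sum>\<^sub>\<infinity>(a, b, t)\<in>V \<times> V \<times> (UNIV :: int set).
      ennreal (D t a b) * ennreal (R a b t P))"

definition load :: "'v set \<Rightarrow> (int \<Rightarrow> 'v \<Rightarrow> 'v) \<Rightarrow> ('v path \<Rightarrow> ennreal) \<Rightarrow> 'v \<times> int \<Rightarrow> ennreal" where
  "load V sch f e = (\<Sum>\<^sub>\<infinity>P\<in>{P. fst P \<in> V \<and> uses_phys sch P e}. f P)"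

definition feasible :: "'v set \<Rightarrow> (int \<Rightarrow> 'v \<Rightarrow> 'v) \<Rightarrow> ('v path \<Rightarrow> ennreal) \<Rightarrow> bool" where
  "feasible V sch f \<longleftrightarrow> (\<forall>i\<in>V. \<forall>s. load V sch f (i, s) \<le> 1)"

definition guarantees_throughput :: "'v set \<Rightarrow> (int \<Rightarrow> 'v \<Rightarrow> 'v)
    \<Rightarrow> ('v \<Rightarrow> 'v \<Rightarrow> int \<Rightarrow> 'v path \<Rightarrow> real) \<Rightarrow> real \<Rightarrow> bool" where
  "guarantees_throughput V sch R r \<longleftrightarrow>
     (\<forall>D. requests_at_most V D r \<longrightarrow> feasible V sch (flow_of V R D))"

text \<open>Nodes (Z/n)^l are represented as functions x :: nat => nat with x p < n for p < l
and x p = 0 for p >= l.\<close>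

definition ebs_nodes :: "nat \<Rightarrow> nat \<Rightarrow> (nat \<Rightarrow> nat) set" where
  "ebs_nodes l n = {x. (\<forall>p<l. x p < n) \<and> (\<forall>p\<ge>l. x p = 0)}"

definition ebs_period :: "nat \<Rightarrow> nat \<Rightarrow> nat" where
  "ebs_period l n = l * (n - 1)"

text \<open>For time t, write t mod T = (n-1) p + s - 1; returns (p, s).\<close>
definition ebs_ps :: "nat \<Rightarrow> nat \<Rightarrow> int \<Rightarrow> nat \<times> nat" where
  "ebs_ps l n t = (let k = nat (t mod int (ebs_period l n)) in (k div (n - 1), k mod (n - 1) + 1))"

definition ebs_add :: "nat \<Rightarrow> (nat \<Rightarrow> nat) \<Rightarrow> nat \<Rightarrow> nat \<Rightarrow> (nat \<Rightarrow> nat)" where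
  "ebs_add n x p s = x(p := (x p + s) mod n)"

definition ebs_sched :: "nat \<Rightarrow> nat \<Rightarrow> int \<Rightarrow> (nat \<Rightarrow> nat) \<Rightarrow> (nat \<Rightarrow> nat)" where
  "ebs_sched l n t x = (case ebs_ps l n t of (p, s) \<Rightarrow> ebs_add n x p s)"

definition ebs_diff :: "nat \<Rightarrow> (nat \<Rightarrow> nat) \<Rightarrow> (nat \<Rightarrow> nat) \<Rightarrow> nat \<Rightarrow> nat" where
  "ebs_diff n b x p = (b p + n - x p) mod n"

definition ebs_gchoice :: "nat \<Rightarrow> nat \<Rightarrow> (nat \<Rightarrow> nat) \<Rightarrow> (nat \<Rightarrow> nat) \<times> int \<Rightarrow> bool" where
  "ebs_gchoice l n b v = (case v of (x, t) \<Rightarrow>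
     (case ebs_ps l n t of (p, s) \<Rightarrow> ebs_diff n b x p = s))"

definition ebs_gstep :: "nat \<Rightarrow> nat \<Rightarrow> (nat \<Rightarrow> nat) \<Rightarrow> (nat \<Rightarrow> nat) \<times> int \<Rightarrow> (nat \<Rightarrow> nat) \<times> int" where
  "ebs_gstep l n b v = (case v of (x, t) \<Rightarrow>
     (if ebs_gchoice l n b (x, t) then (ebs_sched l n t x, t + 1) else (x, t + 1)))"

definition ebs_gstate :: "nat \<Rightarrow> nat \<Rightarrow> (nat \<Rightarrow> nat) \<Rightarrow> (nat \<Rightarrow> nat) \<Rightarrow> int \<Rightarrow> nat
    \<Rightarrow> (nat \<Rightarrow> nat) \<times> int" where
  "ebs_gstate l n b a t k = (ebs_gstep l n b ^^ k) (a, t)"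

definition ebs_semi_len :: "nat \<Rightarrow> nat \<Rightarrow> (nat \<Rightarrow> nat) \<Rightarrow> int \<Rightarrow> (nat \<Rightarrow> nat) \<Rightarrow> nat" where
  "ebs_semi_len l n a t b = (LEAST k. fst (ebs_gstate l n b a t k) = b)"

definition ebs_semi :: "nat \<Rightarrow> nat \<Rightarrow> (nat \<Rightarrow> nat) \<Rightarrow> int \<Rightarrow> (nat \<Rightarrow> nat) \<Rightarrow> bool list" where
  "ebs_semi l n a t b =
     map (\<lambda>k. ebs_gchoice l n b (ebs_gstate l n b a t k)) [0..<ebs_semi_len l n a t b]"

definition ebs_via :: "nat \<Rightarrow> nat \<Rightarrow> (nat \<Rightarrow> nat) \<Rightarrow> (nat \<Rightarrow> nat) \<Rightarrow> int \<Rightarrow> (nat \<Rightarrow> nat)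
    \<Rightarrow> (nat \<Rightarrow> nat) path" where
  "ebs_via l n a b t c =
     (a, t, ebs_semi l n a t c
            @ replicate (ebs_period l n - ebs_semi_len l n a t c) False
            @ ebs_semi l n c (t + int (ebs_period l n)) b)"

definition ebs_R :: "nat \<Rightarrow> nat \<Rightarrow> (nat \<Rightarrow> nat) \<Rightarrow> (nat \<Rightarrow> nat) \<Rightarrow> int \<Rightarrow> (nat \<Rightarrow> nat) path \<Rightarrow> real" where
  "ebs_R l n a b t P = real (card {c \<in> ebs_nodes l n. ebs_via l n a b t c = P}) / real (n ^ l)"

end

theory Submission
  imports Defs
begin

text \<open>
  The greedy semi-path from \<open>(a, t)\<close> towards \<open>c\<close> fixes coordinate \<open>q\<close> of \<open>a\<close> at the first
  slot of the schedule that adds exactly \<open>(c - a)\<^sub>q\<close> to coordinate \<open>q\<close>; every such slot occurs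
  within one period \<open>T = l (n - 1)\<close>, so each semi-path arrives within \<open>T\<close> steps and each path via
  an intermediate node has latency at most \<open>2 T\<close>.

  For the throughput, fix the physical edge leaving \<open>(i, s)\<close>. If the semi-path from \<open>(a, t)\<close> to
  \<open>c\<close> takes it, then \<open>i\<close> agrees in each coordinate with \<open>a\<close> or with \<open>c\<close>, in a pattern
  determined by \<open>c - a\<close>, and the coordinate \<open>p\<close> advanced at time \<open>s\<close> is still that of \<open>a\<close>,
  which fixes \<open>(c - a)\<^sub>p\<close>. So \<open>(a, c) \<mapsto> c - a\<close> is injective into a hyperplane: at most
  \<open>n\<^sup>l\<^sup>-\<^sup>1\<close> pairs per start time, and only \<open>T\<close> start times are possible. Charging the first legs
  to row sums and the second legs to column sums of a demand of throughput \<open>r\<close> bounds the load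
  by \<open>2 r T n\<^sup>l\<^sup>-\<^sup>1 / n\<^sup>l = 2 r l (n - 1) / n\<close>, which is below \<open>1\<close> for \<open>r = 1 / (2 l)\<close>.
\<close>

lemma walk_append:
  "walk sch x t (xs @ ys) = walk sch (walk sch x t xs) (t + int (length xs)) ys"
  by (induction xs arbitrary: x t) (auto simp: algebra_simps)

lemma walk_replicate_False: "walk sch x t (replicate m False) = x"
  by (induction m arbitrary: t) auto

lemma ex_less_add_iff:
  fixes a b :: nat
  shows "(\<exists>k<a + b. Q k) \<longleftrightarrow> (\<exists>k<a. Q k) \<or> (\<exists>j<b. Q (a + j))"
proof
  assume "\<exists>k<a + b. Q k"
  then obtain k where k: "k < a + b" "Q k" by blast
  show "(\<exists>k<a. Q k) \<or> (\<exists>j<b. Q (a + j))"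
  proof (cases "k < a")
    case False
    then show ?thesis using k by (intro disjI2 exI[of _ "k - a"]) auto
  qed (use k in blast)
qed (meson add_less_cancel_left trans_less_add1)

lemma uses_phys_append:
  "uses_phys sch (a, t, xs @ ys) e \<longleftrightarrow>
     uses_phys sch (a, t, xs) e \<or> uses_phys sch (walk sch a t xs, t + int (length xs), ys) e"
  unfolding uses_phys_def split_conv length_append ex_less_add_iff
  by (simp add: nth_append walk_append algebra_simps) blast

lemma not_uses_phys_replicate_False: "\<not> uses_phys sch (a, t, replicate m False) e"
proof
  assume "uses_phys sch (a, t, replicate m False) e"
  then obtain k where "k < m" "replicate m False ! k"
    unfolding uses_phys_def by auto
  then show False by simp
qed

lemma
  fixes B :: "nat \<Rightarrow> 'a::zero set"
  assumes "\<And>q. q < l \<Longrightarrow> finite (B q)"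
  shows finite_functions_supported_below: "finite {x. (\<forall>q<l. x q \<in> B q) \<and> (\<forall>q\<ge>l. x q = 0)}"
    and card_functions_supported_below:
      "card {x. (\<forall>q<l. x q \<in> B q) \<and> (\<forall>q\<ge>l. x q = 0)} = (\<Prod>q<l. card (B q))"
proof -
  let ?S = "{x. (\<forall>q<l. x q \<in> B q) \<and> (\<forall>q\<ge>l. x q = 0)}"
  have "bij_betw (\<lambda>x. restrict x {..<l}) ?S (PiE {..<l} B)"
  proof (rule bij_betw_byWitness[where f' = "\<lambda>f q. if q < l then f q else 0"])
    show "\<forall>x\<in>?S. (\<lambda>q. if q < l then restrict x {..<l} q else 0) = x"
      by (auto simp: fun_eq_iff)
    show "\<forall>f\<in>PiE {..<l} B. restrict (\<lambda>q. if q < l then f q else 0) {..<l} = f"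
    proof
      fix f assume "f \<in> PiE {..<l} B"
      have "restrict (\<lambda>q. if q < l then f q else 0) {..<l} = restrict f {..<l}"
        by (rule restrict_ext) simp
      also have "\<dots> = f"
        using \<open>f \<in> PiE {..<l} B\<close> by (rule PiE_restrict)
      finally show "restrict (\<lambda>q. if q < l then f q else 0) {..<l} = f" .
    qed
    show "(\<lambda>x. restrict x {..<l}) ` ?S \<subseteq> PiE {..<l} B"
    proof (rule image_subsetI)
      fix x assume "x \<in> ?S"
      then show "restrict x {..<l} \<in> PiE {..<l} B"
        by (simp add: Pi_def)
    qed
    show "(\<lambda>f q. if q < l then f q else 0) ` PiE {..<l} B \<subseteq> ?S"
    proof (rule image_subsetI)
      fix f assume "f \<in> PiE {..<l} B"
      then show "(\<lambda>q. if q < l then f q else 0) \<in> ?S"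
        by (simp add: PiE_mem)
    qed
  qed
  moreover have "finite (PiE {..<l} B)"
    using assms by (intro finite_PiE) auto
  ultimately show "finite ?S" "card ?S = (\<Prod>q<l. card (B q))"
    by (auto simp: bij_betw_finite bij_betw_same_card card_PiE)
qed

lemma sum_infsum_ennreal:
  fixes f :: "'a \<Rightarrow> 'b \<Rightarrow> ennreal"
  assumes "finite F"
  shows "(\<Sum>x\<in>F. \<Sum>\<^sub>\<infinity>y\<in>A. f x y) = (\<Sum>\<^sub>\<infinity>y\<in>A. \<Sum>x\<in>F. f x y)"
  using assms
proof (induction F rule: finite_induct)
  case (insert x F)
  have "(\<Sum>\<^sub>\<infinity>y\<in>A. f x y + (\<Sum>x\<in>F. f x y)) = (\<Sum>\<^sub>\<infinity>y\<in>A. f x y) + (\<Sum>\<^sub>\<infinity>y\<in>A. \<Sum>x\<in>F. f x y)"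
    by (intro infsum_add nonneg_summable_on_complete) simp_all
  then show ?case
    using insert by simp
qed simp

lemma sum_triple_product:
  "(\<Sum>(a, b, t)\<in>A \<times> B \<times> C. h a b t) = (\<Sum>t\<in>C. \<Sum>a\<in>A. \<Sum>b\<in>B. h a b t)"
proof -
  have "(\<Sum>(a, b, t)\<in>A \<times> B \<times> C. h a b t) = (\<Sum>a\<in>A. \<Sum>b\<in>B. \<Sum>t\<in>C. h a b t)"
    by (simp add: sum.cartesian_product)
  also have "\<dots> = (\<Sum>a\<in>A. \<Sum>t\<in>C. \<Sum>b\<in>B. h a b t)"
    by (rule sum.cong[OF refl], rule sum.swap)
  also have "\<dots> = (\<Sum>t\<in>C. \<Sum>a\<in>A. \<Sum>b\<in>B. h a b t)"
    by (rule sum.swap)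
  finally show ?thesis .
qed

lemma sum_row_weighted_card_le:
  fixes D :: "'a \<Rightarrow> 'a \<Rightarrow> real"
  assumes "finite A" "finite C" and rows: "\<And>a. a \<in> A \<Longrightarrow> (\<Sum>b\<in>A. D a b) \<le> r"
  shows "(\<Sum>a\<in>A. \<Sum>b\<in>A. D a b * real (card {c \<in> C. U a c}))
     \<le> r * real (card {(a, c) \<in> A \<times> C. U a c})"
proof -
  have "card {(a, c) \<in> A \<times> C. U a c} = card (SIGMA a:A. {c \<in> C. U a c})"
    by (rule arg_cong[where f = card]) auto
  also have "\<dots> = (\<Sum>a\<in>A. card {c \<in> C. U a c})"
    using assms by simp
  finally have card_pairs:
    "real (card {(a, c) \<in> A \<times> C. U a c}) = (\<Sum>a\<in>A. real (card {c \<in> C. U a c}))"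
    by simp
  have "(\<Sum>a\<in>A. \<Sum>b\<in>A. D a b * real (card {c \<in> C. U a c}))
      = (\<Sum>a\<in>A. (\<Sum>b\<in>A. D a b) * real (card {c \<in> C. U a c}))"
    by (simp add: sum_distrib_right)
  also have "\<dots> \<le> (\<Sum>a\<in>A. r * real (card {c \<in> C. U a c}))"
    using rows by (intro sum_mono mult_right_mono) auto
  also have "\<dots> = r * real (card {(a, c) \<in> A \<times> C. U a c})"
    by (simp only: card_pairs sum_distrib_left)
  finally show ?thesis .
qed

lemma
  fixes l n :: nat and r :: real
  assumes "1 \<le> l" "1 \<le> n" "real l = 1 / (2 * r)"
  shows rate_eq_inverse_order: "r = 1 / (2 * real l)"
    and rate_latency_bound_eq: "1 / r * (real (n ^ l) powr (2 * r) - 1) = 2 * real l * (real n - 1)"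
proof -
  show r: "r = 1 / (2 * real l)"
    using assms by (auto simp: field_simps)
  have "real (n ^ l) powr (2 * r) = (real n powr real l) powr (1 / real l)"
    using assms(2) by (simp add: r powr_realpow)
  also have "\<dots> = real n"
    using assms(1,2) by (simp add: powr_powr)
  finally show "1 / r * (real (n ^ l) powr (2 * r) - 1) = 2 * real l * (real n - 1)"
    by (simp add: r)
qed

section \<open>Coordinates and schedule of the EBS design\<close>

locale ebs_design =
  fixes l n :: nat
  assumes order_pos: "1 \<le> l" and base_ge_2: "2 \<le> n"
begin

abbreviation "V \<equiv> ebs_nodes l n"
abbreviation "T \<equiv> ebs_period l n"
abbreviation "sch \<equiv> ebs_sched l n"
abbreviation "R \<equiv> ebs_R l n"

lemma period_pos: "0 < T"
  using order_pos base_ge_2 by (simp add: ebs_period_def)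

lemma ps_range:
  assumes "ebs_ps l n t = (p, \<sigma>)"
  shows "p < l" "1 \<le> \<sigma>" "\<sigma> < n"
proof -
  define k where "k = nat (t mod int T)"
  have "k < l * (n - 1)"
    using period_pos by (simp add: k_def ebs_period_def nat_less_iff)
  moreover have "p = k div (n - 1)" "\<sigma> = k mod (n - 1) + 1"
    using assms by (simp_all add: ebs_ps_def k_def Let_def)
  moreover have "k mod (n - 1) < n - 1"
    using base_ge_2 by simp
  ultimately show "p < l" "1 \<le> \<sigma>" "\<sigma> < n"
    by (simp_all add: less_mult_imp_div_less)
qed

lemma ps_periodic: "ebs_ps l n (t + int T) = ebs_ps l n t"
  by (simp add: ebs_ps_def)

lemma ps_surj:
  assumes "q < l" "1 \<le> d" "d < n"
  obtains j where "j < T" "ebs_ps l n (t + int j) = (q, d)"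
proof -
  obtain e where d: "d = e + 1"
    using assms by (metis le_add_diff_inverse2)
  have e: "e < n - 1"
    using assms d by simp
  define m where "m = q * (n - 1) + e"
  have "m < (q + 1) * (n - 1)"
    using e by (simp add: m_def)
  also have "\<dots> \<le> l * (n - 1)"
    using assms by (intro mult_right_mono) auto
  also have "\<dots> = T"
    by (simp add: ebs_period_def)
  finally have "m < T" .
  define j where "j = nat ((int m - t) mod int T)"
  have "j < T"
    using period_pos by (simp add: j_def nat_less_iff)
  have "(t + int j) mod int T = (t + (int m - t)) mod int T"
    using period_pos by (simp add: j_def mod_add_right_eq)
  also have "\<dots> = int m"
    using \<open>m < T\<close> by simp
  finally have "nat ((t + int j) mod int T) = m"
    by simp
  moreover have "m div (n - 1) = q" "m mod (n - 1) = e"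
    using e by (simp_all add: m_def)
  ultimately have "ebs_ps l n (t + int j) = (q, d)"
    using d by (simp add: ebs_ps_def Let_def)
  with \<open>j < T\<close> show thesis
    by (rule that)
qed

lemma node_lt: "x \<in> V \<Longrightarrow> x q < n"
  using base_ge_2 by (cases "q < l") (auto simp: ebs_nodes_def)

lemma node_eq_0: "x \<in> V \<Longrightarrow> l \<le> q \<Longrightarrow> x q = 0"
  by (simp add: ebs_nodes_def)

lemma finite_nodes: "finite V"
  and card_nodes: "card V = n ^ l"
  using finite_functions_supported_below[of l "\<lambda>_. {..<n}"]
    card_functions_supported_below[of l "\<lambda>_. {..<n}"]
  by (simp_all add: ebs_nodes_def)

lemma card_nodes_coordinate_eq:
  assumes "p < l" "\<sigma> < n"
  shows "card {x \<in> V. x p = \<sigma>} = n ^ (l - 1)"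
proof -
  define B where "B q = (if q = p then {\<sigma>} else {..<n})" for q
  have "{x \<in> V. x p = \<sigma>} = {x. (\<forall>q<l. x q \<in> B q) \<and> (\<forall>q\<ge>l. x q = 0)}"
    using assms by (auto simp: ebs_nodes_def B_def)
  moreover have "(\<Prod>q<l. card (B q)) = card (B p) * (\<Prod>q\<in>{..<l} - {p}. card (B q))"
    using assms by (intro prod.remove) auto
  moreover have "(\<Prod>q\<in>{..<l} - {p}. card (B q)) = n ^ (l - 1)"
    using assms by (simp add: B_def)
  ultimately show ?thesis
    using card_functions_supported_below[of l B] by (simp add: B_def)
qed

lemma diff_lt: "ebs_diff n c a q < n"
  using base_ge_2 by (simp add: ebs_diff_def)

lemma diff_cases:
  assumes "a \<in> V" "c \<in> V"
  shows "ebs_diff n c a q = (if a q \<le> c q then c q - a q else c q + n - a q)"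
proof (cases "a q \<le> c q")
  case True
  have "c q - a q < n"
    using node_lt[OF assms(2), of q] by linarith
  then have "ebs_diff n c a q = c q - a q"
    by (simp only: ebs_diff_def add_diff_assoc2[OF True, symmetric] mod_add_self2 mod_less)
  then show ?thesis
    using True by simp
next
  case False
  then show ?thesis
    using node_lt[OF assms(1), of q] by (simp add: ebs_diff_def)
qed

lemma diff_in_nodes: "a \<in> V \<Longrightarrow> c \<in> V \<Longrightarrow> ebs_diff n c a \<in> V"
  using diff_lt by (simp add: ebs_nodes_def ebs_diff_def)

lemma add_diff: "a \<in> V \<Longrightarrow> c \<in> V \<Longrightarrow> (a q + ebs_diff n c a q) mod n = c q"
  using node_lt[of a q] node_lt[of c q] by (auto simp: diff_cases)

lemma sub_diff: "a \<in> V \<Longrightarrow> c \<in> V \<Longrightarrow> (c q + n - ebs_diff n c a q) mod n = a q"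
  using node_lt[of a q] node_lt[of c q] by (auto simp: diff_cases)

lemma diff_eq_0_iff: "a \<in> V \<Longrightarrow> c \<in> V \<Longrightarrow> ebs_diff n c a q = 0 \<longleftrightarrow> a q = c q"
  using node_lt[of a q] node_lt[of c q] by (auto simp: diff_cases)

lemma node_pair_eq_by_diff:
  assumes nodes: "a \<in> V" "c \<in> V" "a' \<in> V" "c' \<in> V"
    and diff: "ebs_diff n c a = ebs_diff n c' a'" and agree: "\<And>q. a q = a' q \<or> c q = c' q"
  shows "a = a'" "c = c'"
proof -
  have "a q = a' q \<and> c q = c' q" for q
  proof (cases "a q = a' q")
    case True
    then show ?thesis
      using add_diff[OF nodes(1,2), of q] add_diff[OF nodes(3,4), of q] diff by simp
  next
    case False
    then have "c q = c' q"
      using agree by blast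
    then show ?thesis
      using sub_diff[OF nodes(1,2), of q] sub_diff[OF nodes(3,4), of q] diff by simp
  qed
  then show "a = a'" "c = c'"
    by auto
qed

lemma sched_eq: "ebs_ps l n t = (p, \<sigma>) \<Longrightarrow> sch t x = x(p := (x p + \<sigma>) mod n)"
  by (simp add: ebs_sched_def ebs_add_def)

lemma sched_periodic: "sch (t + int T) = sch t"
  by (simp add: fun_eq_iff ebs_sched_def ps_periodic)

lemma sched_bij: "bij_betw (sch t) V V"
proof -
  obtain p \<sigma> where ps: "ebs_ps l n t = (p, \<sigma>)"
    by fastforce
  note ps_bounds = ps_range[OF ps]
  have shift_back: "((z + \<sigma>) mod n + (n - \<sigma>)) mod n = z" if "z < n" for z
  proof -
    have "((z + \<sigma>) mod n + (n - \<sigma>)) mod n = (z + \<sigma> + (n - \<sigma>)) mod n"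
      by (rule mod_add_left_eq)
    also have "z + \<sigma> + (n - \<sigma>) = z + n"
      using ps_bounds by simp
    finally show ?thesis
      using that by simp
  qed
  show ?thesis
  proof (rule bij_betw_byWitness[where f' = "\<lambda>x. x(p := (x p + (n - \<sigma>)) mod n)"])
    show "\<forall>x\<in>V. (sch t x)(p := (sch t x p + (n - \<sigma>)) mod n) = x"
      using shift_back node_lt by (auto simp: sched_eq[OF ps] fun_eq_iff)
    show "\<forall>x\<in>V. sch t (x(p := (x p + (n - \<sigma>)) mod n)) = x"
    proof
      fix x assume "x \<in> V"
      have "((x p + (n - \<sigma>)) mod n + \<sigma>) mod n = (x p + (n - \<sigma>) + \<sigma>) mod n"
        by (rule mod_add_left_eq)
      also have "x p + (n - \<sigma>) + \<sigma> = x p + n"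
        using ps_bounds by simp
      finally have "((x p + (n - \<sigma>)) mod n + \<sigma>) mod n = x p"
        using node_lt[OF \<open>x \<in> V\<close>, of p] by simp
      then show "sch t (x(p := (x p + (n - \<sigma>)) mod n)) = x"
        by (auto simp: sched_eq[OF ps] fun_eq_iff)
    qed
    show "sch t ` V \<subseteq> V" "(\<lambda>x. x(p := (x p + (n - \<sigma>)) mod n)) ` V \<subseteq> V"
      using ps_bounds base_ge_2 by (auto simp: sched_eq[OF ps] ebs_nodes_def)
  qed
qed

section \<open>Greedy semi-paths and paths via intermediate nodes\<close>

lemma gstate_0 [simp]: "ebs_gstate l n c a t 0 = (a, t)"
  by (simp add: ebs_gstate_def)

lemma gstate_Suc: "ebs_gstate l n c a t (Suc k) = ebs_gstep l n c (ebs_gstate l n c a t k)"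
  by (simp add: ebs_gstate_def)

lemma gstate_time: "snd (ebs_gstate l n c a t k) = t + int k"
  by (induction k) (auto simp: gstate_Suc ebs_gstep_def split: prod.splits)

lemma gstate_pair: "ebs_gstate l n c a t k = (fst (ebs_gstate l n c a t k), t + int k)"
  by (metis gstate_time prod.collapse)

lemma walk_gchoices:
  "walk sch a t (map (\<lambda>k. ebs_gchoice l n c (ebs_gstate l n c a t k)) [0..<m])
     = fst (ebs_gstate l n c a t m)"
proof (induction m)
  case (Suc m)
  obtain x where "ebs_gstate l n c a t m = (x, t + int m)"
    using gstate_pair by metis
  then show ?case
    using Suc by (simp add: walk_append gstate_Suc ebs_gstep_def)
qed simp

lemma gstate_coordinate:
  assumes "a \<in> V" "c \<in> V"
  shows "fst (ebs_gstate l n c a t k) q =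
    (if ebs_diff n c a q \<noteq> 0 \<and> (\<exists>j<k. ebs_ps l n (t + int j) = (q, ebs_diff n c a q))
     then c q else a q)"
proof (induction k arbitrary: q)
  case (Suc k)
  define d where "d = ebs_diff n c a"
  define seen where "seen k q \<longleftrightarrow> d q \<noteq> 0 \<and> (\<exists>j<k. ebs_ps l n (t + int j) = (q, d q))" for k q
  obtain X where state: "ebs_gstate l n c a t k = (X, t + int k)"
    using gstate_pair by metis
  obtain p \<sigma> where ps: "ebs_ps l n (t + int k) = (p, \<sigma>)"
    by fastforce
  note ps_bounds = ps_range[OF ps]
  have X: "X q = (if seen k q then c q else a q)" for q
    using Suc state by (simp add: d_def seen_def)
  have seen_Suc: "seen (Suc k) q \<longleftrightarrow> seen k q \<or> (q = p \<and> d q = \<sigma>)" for q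
    using ps ps_bounds by (auto simp: seen_def less_Suc_eq)
  have step: "fst (ebs_gstate l n c a t (Suc k)) =
      (if ebs_diff n c X p = \<sigma> then X(p := (X p + \<sigma>) mod n) else X)"
    using state ps
    by (simp add: gstate_Suc ebs_gstep_def ebs_gchoice_def ebs_sched_def ebs_add_def)
  have "fst (ebs_gstate l n c a t (Suc k)) q = (if seen (Suc k) q then c q else a q)"
  proof (cases "q = p \<and> \<not> seen k p")
    case True
    then have Xp: "X p = a p" and dX: "ebs_diff n c X p = d p"
      using X by (simp_all add: d_def ebs_diff_def)
    show ?thesis
    proof (cases "d p = \<sigma>")
      case True
      then show ?thesis
        using \<open>q = p \<and> \<not> seen k p\<close> step Xp dX seen_Suc[of p] add_diff[OF assms, of p]
        by (simp add: d_def)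
    next
      case False
      then show ?thesis
        using \<open>q = p \<and> \<not> seen k p\<close> step Xp dX seen_Suc[of p] by simp
    qed
  next
    case False
    moreover have "ebs_diff n c X p \<noteq> \<sigma>" if "seen k p"
      using that X ps_bounds by (simp add: ebs_diff_def)
    ultimately show ?thesis
      using step seen_Suc[of q] X by auto
  qed
  then show ?case
    by (simp add: seen_def d_def)
qed simp

lemma gstate_after_period: "a \<in> V \<Longrightarrow> c \<in> V \<Longrightarrow> fst (ebs_gstate l n c a t T) = c"
proof (rule ext)
  fix q assume a: "a \<in> V" and c: "c \<in> V"
  show "fst (ebs_gstate l n c a t T) q = c q"
  proof (cases "ebs_diff n c a q = 0")
    case False
    have "q < l"
    proof (rule ccontr)
      assume "\<not> q < l"
      then have "a q = c q"
        using node_eq_0[OF a] node_eq_0[OF c] by simp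
      then show False
        using False diff_eq_0_iff[OF a c] by simp
    qed
    then obtain j where "j < T" "ebs_ps l n (t + int j) = (q, ebs_diff n c a q)"
      using False diff_lt by (metis less_one not_le ps_surj)
    then show ?thesis
      using False gstate_coordinate[OF a c] by auto
  qed (simp add: gstate_coordinate[OF a c] diff_eq_0_iff[OF a c])
qed

lemma semi_len_le_period: "a \<in> V \<Longrightarrow> c \<in> V \<Longrightarrow> ebs_semi_len l n a t c \<le> T"
  unfolding ebs_semi_len_def by (rule Least_le) (rule gstate_after_period)

lemma gstate_semi_len:
  "a \<in> V \<Longrightarrow> c \<in> V \<Longrightarrow> fst (ebs_gstate l n c a t (ebs_semi_len l n a t c)) = c"
  unfolding ebs_semi_len_def by (rule LeastI) (rule gstate_after_period)

lemma length_semi [simp]: "length (ebs_semi l n a t c) = ebs_semi_len l n a t c"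
  by (simp add: ebs_semi_def)

lemma walk_semi: "a \<in> V \<Longrightarrow> c \<in> V \<Longrightarrow> walk sch a t (ebs_semi l n a t c) = c"
  by (simp add: ebs_semi_def walk_gchoices gstate_semi_len)

lemma uses_phys_semiD:
  assumes "uses_phys sch (a, t, ebs_semi l n a t c) (i, s)"
  obtains k where "k < ebs_semi_len l n a t c" "s = t + int k"
    "ebs_gstate l n c a t k = (i, s)" "ebs_gchoice l n c (i, s)"
proof -
  obtain k where k: "k < ebs_semi_len l n a t c" "ebs_semi l n a t c ! k"
      "walk sch a t (take k (ebs_semi l n a t c)) = i" "t + int k = s"
    using assms by (auto simp: uses_phys_def)
  have "take k (ebs_semi l n a t c) = map (\<lambda>j. ebs_gchoice l n c (ebs_gstate l n c a t j)) [0..<k]"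
    using k(1) by (simp add: ebs_semi_def take_map)
  then have state: "ebs_gstate l n c a t k = (i, s)"
    using k(3,4) gstate_pair[of c a t k] by (simp add: walk_gchoices)
  have "ebs_gchoice l n c (ebs_gstate l n c a t k)"
    using k(1,2) by (simp add: ebs_semi_def)
  then have "ebs_gchoice l n c (i, s)"
    by (simp only: state)
  then show thesis
    by (rule that[OF k(1) k(4)[symmetric] state])
qed

lemma uses_phys_semi_time:
  assumes "uses_phys sch (a, t, ebs_semi l n a t c) (i, s)" "a \<in> V" "c \<in> V"
  shows "t \<le> s" "s < t + int T"
  using uses_phys_semiD[OF assms(1)] semi_len_le_period[OF assms(2,3), of t] by fastforce+

lemma fst_via [simp]: "fst (ebs_via l n a b t c) = a"
  and fst_snd_via [simp]: "fst (snd (ebs_via l n a b t c)) = t"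
  by (simp_all add: ebs_via_def)

lemma via_in_route_paths:
  assumes "a \<in> V" "b \<in> V" "c \<in> V"
  shows "ebs_via l n a b t c \<in> route_paths sch a b t"
  using semi_len_le_period[OF assms(1,3), of t]
  by (simp add: ebs_via_def route_paths_def walk_append walk_replicate_False
      walk_semi[OF assms(1,3)] walk_semi[OF assms(3,2)])

lemma latency_via_le:
  "a \<in> V \<Longrightarrow> b \<in> V \<Longrightarrow> c \<in> V \<Longrightarrow> latency (ebs_via l n a b t c) \<le> 2 * T"
  using semi_len_le_period[of a c t] semi_len_le_period[of c b "t + int T"]
  by (simp add: ebs_via_def latency_def)

lemma uses_phys_viaD:
  assumes "uses_phys sch (ebs_via l n a b t c) e" "a \<in> V" "c \<in> V"
  shows "uses_phys sch (a, t, ebs_semi l n a t c) e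
    \<or> uses_phys sch (c, t + int T, ebs_semi l n c (t + int T) b) e"
  using assms semi_len_le_period[OF assms(2,3), of t]
  by (simp add: ebs_via_def uses_phys_append walk_semi walk_replicate_False
      not_uses_phys_replicate_False)

lemma via_user_time:
  assumes "a \<in> V" "b \<in> V" "c \<in> V" "uses_phys sch (ebs_via l n a b t c) (i, s)"
  shows "s - 2 * int T < t" "t \<le> s"
  using uses_phys_viaD[OF assms(4,1,3)] uses_phys_semi_time[OF _ assms(1,3), of t i s]
    uses_phys_semi_time[OF _ assms(3,2), of "t + int T" i s]
  by auto

lemma gstate_periodic:
  "ebs_gstate l n c a (t + int T) k = (fst (ebs_gstate l n c a t k), t + int k + int T)"
proof (induction k)
  case (Suc k)
  obtain x where "ebs_gstate l n c a t k = (x, t + int k)"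
    using gstate_pair by metis
  then show ?case
    using Suc ps_periodic[of "t + int k"] sched_periodic[of "t + int k"]
    by (simp add: gstate_Suc ebs_gstep_def ebs_gchoice_def algebra_simps)
qed simp

lemma semi_len_periodic: "ebs_semi_len l n a (t + int T) c = ebs_semi_len l n a t c"
  by (simp add: ebs_semi_len_def gstate_periodic)

lemma gchoice_periodic:
  "ebs_gchoice l n c (ebs_gstate l n c a (t + int T) k) = ebs_gchoice l n c (ebs_gstate l n c a t k)"
proof -
  obtain x where "ebs_gstate l n c a t k = (x, t + int k)"
    using gstate_pair by metis
  then show ?thesis
    using gstate_periodic[of c a t k] ps_periodic[of "t + int k"] by (simp add: ebs_gchoice_def)
qed

lemma semi_periodic: "ebs_semi l n a (t + int T) c = ebs_semi l n a t c"
  by (simp add: ebs_semi_def semi_len_periodic gchoice_periodic)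

lemma via_periodic:
  "ebs_via l n a b (t + int T) c = (a, t + int T, snd (snd (ebs_via l n a b t c)))"
  unfolding ebs_via_def semi_len_periodic semi_periodic by simp

section \<open>Semi-paths through a fixed physical edge\<close>

lemma semi_user_coordinate:
  assumes "uses_phys sch (a, t, ebs_semi l n a t c) (i, s)" "a \<in> V" "c \<in> V"
  shows "i q = (if ebs_diff n c a q \<noteq> 0 \<and>
      (\<exists>j<nat (s - t). ebs_ps l n (t + int j) = (q, ebs_diff n c a q)) then c q else a q)"
proof -
  obtain k where "s = t + int k" "ebs_gstate l n c a t k = (i, s)"
    using assms(1) by (rule uses_phys_semiD)
  then show ?thesis
    using gstate_coordinate[OF assms(2,3), of t k q] by simp
qed

lemma semi_user_advanced_coordinate:
  assumes "uses_phys sch (a, t, ebs_semi l n a t c) (i, s)" "a \<in> V" "c \<in> V"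
    and ps: "ebs_ps l n s = (p, \<sigma>)"
  shows "ebs_diff n c a p = \<sigma>"
proof -
  obtain k where "ebs_gchoice l n c (i, s)"
    using assms(1) by (rule uses_phys_semiD)
  then have choice: "ebs_diff n c i p = \<sigma>"
    using ps by (simp add: ebs_gchoice_def)
  have "i p = a p"
  proof (rule ccontr)
    assume "i p \<noteq> a p"
    then have "i p = c p"
      using semi_user_coordinate[OF assms(1-3), of p] by (auto split: if_splits)
    then show False
      using choice ps_range[OF ps] by (simp add: ebs_diff_def)
  qed
  then show ?thesis
    using choice by (simp add: ebs_diff_def)
qed

lemma card_semi_users_le:
  "card {(a, c) \<in> V \<times> V. uses_phys sch (a, t, ebs_semi l n a t c) (i, s)} \<le> n ^ (l - 1)"
proof -
  define U where "U = {(a, c) \<in> V \<times> V. uses_phys sch (a, t, ebs_semi l n a t c) (i, s)}"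
  obtain p \<sigma> where ps: "ebs_ps l n s = (p, \<sigma>)"
    by fastforce
  have "inj_on (\<lambda>(a, c). ebs_diff n c a) U"
  proof (rule inj_onI, clarify)
    fix a c a' c'
    assume "(a, c) \<in> U" "(a', c') \<in> U" and d: "ebs_diff n c a = ebs_diff n c' a'"
    then have nodes: "a \<in> V" "c \<in> V" "a' \<in> V" "c' \<in> V"
      and users: "uses_phys sch (a, t, ebs_semi l n a t c) (i, s)"
        "uses_phys sch (a', t, ebs_semi l n a' t c') (i, s)"
      by (auto simp: U_def)
    have "a q = a' q \<or> c q = c' q" for q
      using semi_user_coordinate[OF users(1) nodes(1,2), of q]
        semi_user_coordinate[OF users(2) nodes(3,4), of q] d
      by (auto split: if_splits)
    then show "a = a' \<and> c = c'"
      using node_pair_eq_by_diff[OF nodes d] by blast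
  qed
  moreover have "(\<lambda>(a, c). ebs_diff n c a) ` U \<subseteq> {x \<in> V. x p = \<sigma>}"
    using diff_in_nodes semi_user_advanced_coordinate[OF _ _ _ ps] by (auto simp: U_def)
  moreover have "finite {x \<in> V. x p = \<sigma>}"
    using finite_nodes by simp
  ultimately have "card U \<le> card {x \<in> V. x p = \<sigma>}"
    by (rule card_inj_on_le)
  then show ?thesis
    using card_nodes_coordinate_eq[OF ps_range(1,3)[OF ps]] by (simp add: U_def)
qed

lemma sum_card_semi_users_le:
  assumes "finite W"
  shows "(\<Sum>t\<in>W. card {(a, c) \<in> V \<times> V. uses_phys sch (a, t + u, ebs_semi l n a (t + u) c) (i, s)})
    \<le> T * n ^ (l - 1)"
proof -
  define f where "f t = card {(a, c) \<in> V \<times> V. uses_phys sch (a, t + u, ebs_semi l n a (t + u) c) (i, s)}"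
    for t
  define J where "J = {s - u - int T <.. s - u}"
  have "f t = 0" if "t \<notin> J" for t
  proof -
    have "\<not> uses_phys sch (a, t + u, ebs_semi l n a (t + u) c) (i, s)" if "a \<in> V" "c \<in> V" for a c
      using uses_phys_semi_time[OF _ that, of "t + u" i s] \<open>t \<notin> J\<close> by (auto simp: J_def)
    then have "{(a, c) \<in> V \<times> V. uses_phys sch (a, t + u, ebs_semi l n a (t + u) c) (i, s)} = {}"
      by auto
    then show ?thesis
      unfolding f_def by (metis card.empty)
  qed
  then have "(\<Sum>t\<in>W. f t) = (\<Sum>t\<in>W \<inter> J. f t)"
    using assms by (intro sum.mono_neutral_right) auto
  also have "\<dots> \<le> (\<Sum>t\<in>J. f t)"
    by (rule sum_mono2) (auto simp: J_def)
  also have "\<dots> \<le> card J * n ^ (l - 1)"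
    using sum_bounded_above[of J f "n ^ (l - 1)"] card_semi_users_le by (simp add: f_def)
  also have "card J = T"
    by (simp add: J_def)
  finally show ?thesis
    by (simp add: f_def)
qed

lemma R_nonneg: "0 \<le> R a b t P"
  by (simp add: ebs_R_def)

lemma R_nonzero_imp_via:
  assumes "R a b t P \<noteq> 0"
  obtains c where "c \<in> V" "ebs_via l n a b t c = P"
proof -
  have "card {c \<in> V. ebs_via l n a b t c = P} \<noteq> 0"
    using assms by (simp add: ebs_R_def)
  then have "{c \<in> V. ebs_via l n a b t c = P} \<noteq> {}"
    by (metis card.empty)
  then show thesis
    using that by blast
qed

lemma sum_R:
  assumes "finite F"
  shows "(\<Sum>P\<in>F. R a b t P) = real (card {c \<in> V. ebs_via l n a b t c \<in> F}) / real (n ^ l)"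
proof -
  have "card {c \<in> V. ebs_via l n a b t c \<in> F} = card (\<Union>P\<in>F. {c \<in> V. ebs_via l n a b t c = P})"
    by (rule arg_cong[where f = card]) auto
  also have "\<dots> = (\<Sum>P\<in>F. card {c \<in> V. ebs_via l n a b t c = P})"
    by (rule card_UN_disjoint[OF assms]) (use finite_nodes in auto)
  finally have "card {c \<in> V. ebs_via l n a b t c \<in> F} = (\<Sum>P\<in>F. card {c \<in> V. ebs_via l n a b t c = P})" .
  then show ?thesis
    by (simp add: ebs_R_def sum_divide_distrib)
qed

lemma infsum_R:
  assumes "a \<in> V" "b \<in> V"
  shows "(\<Sum>\<^sub>\<infinity>P\<in>route_paths sch a b t. ennreal (R a b t P)) = 1"
proof -
  define F where "F = ebs_via l n a b t ` V"
  have "finite F"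
    using finite_nodes by (simp add: F_def)
  have "(\<Sum>\<^sub>\<infinity>P\<in>route_paths sch a b t. ennreal (R a b t P)) = (\<Sum>\<^sub>\<infinity>P\<in>F. ennreal (R a b t P))"
  proof (rule infsum_cong_neutral)
    show "ennreal (R a b t P) = 0" if "P \<in> route_paths sch a b t - F" for P
      using that R_nonzero_imp_via[of a b t P] by (force simp: F_def)
    show "ennreal (R a b t P) = 0" if "P \<in> F - route_paths sch a b t" for P
      using that via_in_route_paths[OF assms] by (auto simp: F_def)
  qed simp
  also have "\<dots> = ennreal (\<Sum>P\<in>F. R a b t P)"
    using \<open>finite F\<close> by (simp add: sum_ennreal R_nonneg)
  also have "(\<Sum>P\<in>F. R a b t P) = 1"
  proof -
    have "{c \<in> V. ebs_via l n a b t c \<in> F} = V"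
      by (auto simp: F_def)
    then show ?thesis
      using \<open>finite F\<close> card_nodes base_ge_2 by (simp add: sum_R)
  qed
  finally show ?thesis
    by simp
qed

lemma R_periodic: "R a b (t + int T) (x, s + int T, cs) = R a b t (x, s, cs)"
proof -
  have "ebs_via l n a b (t + int T) c = (x, s + int T, cs) \<longleftrightarrow> ebs_via l n a b t c = (x, s, cs)" for c
    using fst_via[of a b t c] fst_snd_via[of a b t c]
    by (cases "ebs_via l n a b t c") (auto simp: via_periodic)
  then show ?thesis
    by (simp add: ebs_R_def)
qed

lemma ebs_oblivious_routing_scheme: "oblivious_routing_scheme V T sch R"
  unfolding oblivious_routing_scheme_def connection_schedule_def
proof (intro conjI allI ballI impI)
  fix a b t P
  assume a: "a \<in> V" and b: "b \<in> V" and "R a b t P \<noteq> 0"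
  from \<open>R a b t P \<noteq> 0\<close> obtain c where "c \<in> V" "ebs_via l n a b t c = P"
    by (rule R_nonzero_imp_via)
  then show "P \<in> route_paths sch a b t"
    using via_in_route_paths[OF a b] by blast
qed (use period_pos sched_bij sched_periodic R_nonneg infsum_R R_periodic in auto)

lemma ebs_max_latency: "max_latency_le V R (2 * real l * (real n - 1))"
  unfolding max_latency_le_def
proof (intro ballI allI impI)
  fix a b t P assume a: "a \<in> V" and b: "b \<in> V" and "0 < R a b t P"
  then have "R a b t P \<noteq> 0"
    by simp
  then obtain c where "c \<in> V" "ebs_via l n a b t c = P"
    by (rule R_nonzero_imp_via)
  then have "latency P \<le> 2 * (l * (n - 1))"
    using latency_via_le[OF a b] by (auto simp: ebs_period_def)
  then have "real (latency P) \<le> real (2 * (l * (n - 1)))"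
    by (simp only: of_nat_le_iff)
  then show "real (latency P) \<le> 2 * real l * (real n - 1)"
    using base_ge_2 by (simp add: of_nat_diff)
qed

section \<open>Load and throughput\<close>

definition via_users :: "(nat \<Rightarrow> nat) \<times> int \<Rightarrow> (nat \<Rightarrow> nat) \<Rightarrow> (nat \<Rightarrow> nat) \<Rightarrow> int
    \<Rightarrow> (nat \<Rightarrow> nat) set"
  where "via_users e a b t = {c \<in> V. uses_phys sch (ebs_via l n a b t c) e}"

lemma load_le_infsum_users:
  assumes nonneg: "\<And>t a b. a \<in> V \<Longrightarrow> b \<in> V \<Longrightarrow> 0 \<le> D t a b"
  shows "load V sch (flow_of V R D) e \<le> (\<Sum>\<^sub>\<infinity>(a, b, t)\<in>V \<times> V \<times> UNIV.
     ennreal (D t a b * real (card (via_users e a b t)) / real (n ^ l)))"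
  unfolding load_def
proof (rule infsum_le_finite_sums)
  show "flow_of V R D summable_on {P. fst P \<in> V \<and> uses_phys sch P e}"
    by (rule nonneg_summable_on_complete) simp
next
  fix F assume F: "finite F" "F \<subseteq> {P. fst P \<in> V \<and> uses_phys sch P e}"
  have "(\<Sum>P\<in>F. flow_of V R D P) = (\<Sum>\<^sub>\<infinity>x\<in>V \<times> V \<times> UNIV. \<Sum>P\<in>F.
      case x of (a, b, t) \<Rightarrow> ennreal (D t a b) * ennreal (R a b t P))"
    unfolding flow_of_def by (rule sum_infsum_ennreal[OF F(1)])
  also have "\<dots> \<le> (\<Sum>\<^sub>\<infinity>(a, b, t)\<in>V \<times> V \<times> UNIV.
     ennreal (D t a b * real (card (via_users e a b t)) / real (n ^ l)))"
  proof (rule infsum_mono[OF nonneg_summable_on_complete nonneg_summable_on_complete])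
    fix x assume "x \<in> V \<times> V \<times> (UNIV :: int set)"
    then obtain a b t where x: "x = (a, b, t)" and a: "a \<in> V" and b: "b \<in> V"
      by auto
    have "{c \<in> V. ebs_via l n a b t c \<in> F} \<subseteq> via_users e a b t"
      using F(2) by (auto simp: via_users_def)
    then have "(\<Sum>P\<in>F. R a b t P) \<le> real (card (via_users e a b t)) / real (n ^ l)"
      using F(1) finite_nodes by (simp add: sum_R divide_right_mono card_mono via_users_def)
    then have "D t a b * (\<Sum>P\<in>F. R a b t P)
        \<le> D t a b * (real (card (via_users e a b t)) / real (n ^ l))"
      by (rule mult_left_mono) (rule nonneg[OF a b])
    moreover have "(\<Sum>P\<in>F. ennreal (D t a b) * ennreal (R a b t P)) = ennreal (D t a b * (\<Sum>P\<in>F. R a b t P))"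
      using nonneg[OF a b] R_nonneg
      by (simp add: sum_distrib_left[symmetric] sum_ennreal ennreal_mult sum_nonneg)
    ultimately show "(\<Sum>P\<in>F. case x of (a, b, t) \<Rightarrow> ennreal (D t a b) * ennreal (R a b t P))
        \<le> (case x of (a, b, t) \<Rightarrow>
          ennreal (D t a b * real (card (via_users e a b t)) / real (n ^ l)))"
      by (simp add: x ennreal_leI)
  qed simp_all
  finally show "(\<Sum>P\<in>F. flow_of V R D P) \<le> \<dots>" .
qed

definition first_leg_users :: "(nat \<Rightarrow> nat) \<times> int \<Rightarrow> (nat \<Rightarrow> nat) \<Rightarrow> int \<Rightarrow> (nat \<Rightarrow> nat) set"
  where "first_leg_users e a t = {c \<in> V. uses_phys sch (a, t, ebs_semi l n a t c) e}"

definition second_leg_users :: "(nat \<Rightarrow> nat) \<times> int \<Rightarrow> int \<Rightarrow> (nat \<Rightarrow> nat) \<Rightarrow> (nat \<Rightarrow> nat) set"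
  where "second_leg_users e t b = {c \<in> V. uses_phys sch (c, t + int T, ebs_semi l n c (t + int T) b) e}"

lemma card_via_users_le:
  assumes "a \<in> V" "b \<in> V"
  shows "card (via_users e a b t) \<le> card (first_leg_users e a t) + card (second_leg_users e t b)"
proof -
  have "via_users e a b t \<subseteq> first_leg_users e a t \<union> second_leg_users e t b"
    using uses_phys_viaD[of a b t _ e] assms
    by (auto simp: via_users_def first_leg_users_def second_leg_users_def)
  then have "card (via_users e a b t) \<le> card (first_leg_users e a t \<union> second_leg_users e t b)"
    using finite_nodes by (intro card_mono) (auto simp: first_leg_users_def second_leg_users_def)
  also have "\<dots> \<le> card (first_leg_users e a t) + card (second_leg_users e t b)"
    by (rule card_Un_le)
  finally show ?thesis .
qed

lemma sum_via_users_le_legs: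
  assumes nonneg: "\<And>t a b. a \<in> V \<Longrightarrow> b \<in> V \<Longrightarrow> 0 \<le> D t a b"
  shows "(\<Sum>(a, b, t)\<in>V \<times> V \<times> W. D t a b * real (card (via_users e a b t)))
    \<le> (\<Sum>t\<in>W. \<Sum>a\<in>V. \<Sum>b\<in>V. D t a b * real (card (first_leg_users e a t)))
      + (\<Sum>t\<in>W. \<Sum>b\<in>V. \<Sum>a\<in>V. D t a b * real (card (second_leg_users e t b)))"
proof -
  let ?K1 = "\<lambda>a t. real (card (first_leg_users e a t))"
  let ?K2 = "\<lambda>t b. real (card (second_leg_users e t b))"
  have "(\<Sum>(a, b, t)\<in>V \<times> V \<times> W. D t a b * real (card (via_users e a b t)))
      \<le> (\<Sum>(a, b, t)\<in>V \<times> V \<times> W. D t a b * ?K1 a t + D t a b * ?K2 t b)"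
  proof (rule sum_mono, clarify)
    fix a b t assume "a \<in> V" "b \<in> V" "t \<in> W"
    have "real (card (via_users e a b t)) \<le> ?K1 a t + ?K2 t b"
      using card_via_users_le[OF \<open>a \<in> V\<close> \<open>b \<in> V\<close>, of e t]
      by (simp only: of_nat_add[symmetric] of_nat_le_iff)
    then show "D t a b * real (card (via_users e a b t)) \<le> D t a b * ?K1 a t + D t a b * ?K2 t b"
      using nonneg[OF \<open>a \<in> V\<close> \<open>b \<in> V\<close>, of t] by (simp add: distrib_left[symmetric] mult_left_mono)
  qed
  also have "\<dots> = (\<Sum>t\<in>W. \<Sum>a\<in>V. \<Sum>b\<in>V. D t a b * ?K1 a t + D t a b * ?K2 t b)"
    by (rule sum_triple_product)
  also have "\<dots> = (\<Sum>t\<in>W. \<Sum>a\<in>V. \<Sum>b\<in>V. D t a b * ?K1 a t)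
      + (\<Sum>t\<in>W. \<Sum>b\<in>V. \<Sum>a\<in>V. D t a b * ?K2 t b)"
    using sum.swap[of "\<lambda>a b. D _ a b * ?K2 _ b" V V] by (simp add: sum.distrib)
  finally show ?thesis .
qed

text \<open>Paths whose first leg takes the edge are charged to the row sums of \<open>D\<close>, those whose
  second leg does to the column sums.\<close>

lemma sum_demand_users_le:
  assumes D: "requests_at_most V D r" and "0 \<le> r" and "finite W"
  shows "(\<Sum>(a, b, t)\<in>V \<times> V \<times> W. D t a b * real (card (via_users (i, s) a b t)))
    \<le> 2 * r * real (T * n ^ (l - 1))"
proof -
  define U1 where "U1 t a c \<longleftrightarrow> uses_phys sch (a, t, ebs_semi l n a t c) (i, s)" for t a c
  define U2 where "U2 t b c \<longleftrightarrow> uses_phys sch (c, t + int T, ebs_semi l n c (t + int T) b) (i, s)"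
    for t b c
  have legs: "first_leg_users (i, s) a t = {c \<in> V. U1 t a c}"
    "second_leg_users (i, s) t b = {c \<in> V. U2 t b c}" for a b t
    by (simp_all add: first_leg_users_def second_leg_users_def U1_def U2_def)
  have nonneg: "a \<in> V \<Longrightarrow> b \<in> V \<Longrightarrow> 0 \<le> D t a b"
    and rows: "a \<in> V \<Longrightarrow> (\<Sum>b\<in>V. D t a b) \<le> r"
    and cols: "b \<in> V \<Longrightarrow> (\<Sum>a\<in>V. D t a b) \<le> r" for t a b
    using D by (auto simp: requests_at_most_def)
  have bound1: "(\<Sum>t\<in>W. card {(a, c) \<in> V \<times> V. U1 t a c}) \<le> T * n ^ (l - 1)"
    using sum_card_semi_users_le[OF \<open>finite W\<close>, of 0 i s] by (simp add: U1_def)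
  have "card {(b, c) \<in> V \<times> V. U2 t b c} = card {(c, b) \<in> V \<times> V. U2 t b c}" for t
    by (rule bij_betw_same_card[of prod.swap]) (auto simp: bij_betw_def inj_on_def)
  then have bound2: "(\<Sum>t\<in>W. card {(b, c) \<in> V \<times> V. U2 t b c}) \<le> T * n ^ (l - 1)"
    using sum_card_semi_users_le[OF \<open>finite W\<close>, of "int T" i s] by (simp add: U2_def)
  have "(\<Sum>(a, b, t)\<in>V \<times> V \<times> W. D t a b * real (card (via_users (i, s) a b t)))
      \<le> (\<Sum>t\<in>W. \<Sum>a\<in>V. \<Sum>b\<in>V. D t a b * real (card {c \<in> V. U1 t a c}))
        + (\<Sum>t\<in>W. \<Sum>b\<in>V. \<Sum>a\<in>V. D t a b * real (card {c \<in> V. U2 t b c}))"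
    using sum_via_users_le_legs[where D = D and W = W and e = "(i, s)", OF nonneg] by (simp only: legs)
  also have "\<dots> \<le> (\<Sum>t\<in>W. r * real (card {(a, c) \<in> V \<times> V. U1 t a c}))
      + (\<Sum>t\<in>W. r * real (card {(b, c) \<in> V \<times> V. U2 t b c}))"
  proof (intro add_mono sum_mono)
    fix t
    show "(\<Sum>a\<in>V. \<Sum>b\<in>V. D t a b * real (card {c \<in> V. U1 t a c}))
        \<le> r * real (card {(a, c) \<in> V \<times> V. U1 t a c})"
      using rows by (rule sum_row_weighted_card_le[OF finite_nodes finite_nodes])
    show "(\<Sum>b\<in>V. \<Sum>a\<in>V. D t a b * real (card {c \<in> V. U2 t b c}))
        \<le> r * real (card {(b, c) \<in> V \<times> V. U2 t b c})"
      using cols by (rule sum_row_weighted_card_le[OF finite_nodes finite_nodes])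
  qed
  also have "\<dots> = r * real (\<Sum>t\<in>W. card {(a, c) \<in> V \<times> V. U1 t a c})
      + r * real (\<Sum>t\<in>W. card {(b, c) \<in> V \<times> V. U2 t b c})"
    by (simp add: sum_distrib_left)
  also have "\<dots> \<le> r * real (T * n ^ (l - 1)) + r * real (T * n ^ (l - 1))"
    by (intro add_mono mult_left_mono) (simp_all only: of_nat_le_iff bound1 bound2 \<open>0 \<le> r\<close>)
  finally show ?thesis
    by simp
qed

lemma load_le:
  assumes D: "requests_at_most V D r" and "0 \<le> r"
  shows "load V sch (flow_of V R D) (i, s) \<le> ennreal (2 * r * real (T * n ^ (l - 1)) / real (n ^ l))"
proof -
  define W where "W = {s - 2 * int T <.. s}"
  have nonneg: "a \<in> V \<Longrightarrow> b \<in> V \<Longrightarrow> 0 \<le> D t a b" for t a b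
    using D by (auto simp: requests_at_most_def)
  have "finite (V \<times> V \<times> W)"
    using finite_nodes by (simp add: W_def)
  have "load V sch (flow_of V R D) (i, s) \<le> (\<Sum>\<^sub>\<infinity>(a, b, t)\<in>V \<times> V \<times> UNIV.
      ennreal (D t a b * real (card (via_users (i, s) a b t)) / real (n ^ l)))"
    using nonneg by (rule load_le_infsum_users)
  also have "\<dots> = (\<Sum>\<^sub>\<infinity>(a, b, t)\<in>V \<times> V \<times> W.
      ennreal (D t a b * real (card (via_users (i, s) a b t)) / real (n ^ l)))"
  proof (rule infsum_cong_neutral)
    fix x assume "x \<in> V \<times> V \<times> UNIV - V \<times> V \<times> W"
    then obtain a b t where x: "x = (a, b, t)" "a \<in> V" "b \<in> V" "t \<notin> W"
      by auto
    have "via_users (i, s) a b t = {}"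
      using via_user_time[OF x(2,3)] x(4) by (auto simp: via_users_def W_def)
    then show "(case x of (a, b, t) \<Rightarrow>
        ennreal (D t a b * real (card (via_users (i, s) a b t)) / real (n ^ l))) = 0"
      by (simp add: x)
  qed auto
  also have "\<dots> = ennreal (\<Sum>(a, b, t)\<in>V \<times> V \<times> W.
      D t a b * real (card (via_users (i, s) a b t)) / real (n ^ l))"
    unfolding infsum_finite[OF \<open>finite (V \<times> V \<times> W)\<close>] split_def
    by (rule sum_ennreal) (auto intro!: divide_nonneg_nonneg mult_nonneg_nonneg nonneg)
  also have "(\<Sum>(a, b, t)\<in>V \<times> V \<times> W. D t a b * real (card (via_users (i, s) a b t)) / real (n ^ l))
      = (\<Sum>(a, b, t)\<in>V \<times> V \<times> W. D t a b * real (card (via_users (i, s) a b t))) / real (n ^ l)"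
    by (simp add: sum_divide_distrib split_def)
  also have "\<dots> \<le> 2 * r * real (T * n ^ (l - 1)) / real (n ^ l)"
    using sum_demand_users_le[OF D \<open>0 \<le> r\<close>, of W i s] by (simp add: W_def divide_right_mono)
  finally show ?thesis
    by (simp add: ennreal_leI)
qed

lemma ebs_guarantees_throughput: "guarantees_throughput V sch R (1 / (2 * real l))"
  unfolding guarantees_throughput_def feasible_def
proof (intro allI impI ballI)
  fix D i s assume D: "requests_at_most V D (1 / (2 * real l))"
  have "load V sch (flow_of V R D) (i, s)
      \<le> ennreal (2 * (1 / (2 * real l)) * real (T * n ^ (l - 1)) / real (n ^ l))"
    by (rule load_le[OF D]) simp
  also have "2 * (1 / (2 * real l)) * real (T * n ^ (l - 1)) / real (n ^ l) = (real n - 1) / real n"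
  proof -
    have "real n ^ l = real n * real n ^ (l - 1)"
      using order_pos by (simp add: power_eq_if)
    then show ?thesis
      using order_pos base_ge_2 by (simp add: ebs_period_def of_nat_diff field_simps)
  qed
  also have "ennreal ((real n - 1) / real n) \<le> 1"
    using base_ge_2 by (simp add: ennreal_le_1)
  finally show "load V sch (flow_of V R D) (i, s) \<le> 1" .
qed

end

theorem proposition4p1:
  fixes l n :: nat
  assumes "l \<ge> 1" and "n \<ge> 2"
  shows "oblivious_routing_scheme (ebs_nodes l n) (ebs_period l n) (ebs_sched l n) (ebs_R l n)
    \<and> guarantees_throughput (ebs_nodes l n) (ebs_sched l n) (ebs_R l n) (1 / (2 * real l))
    \<and> max_latency_le (ebs_nodes l n) (ebs_R l n) (2 * real l * (real n - 1))
    \<and> (\<forall>r::real. r \<le> 1 / 2 \<and> real l = 1 / (2 * r) \<longrightarrow>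
         guarantees_throughput (ebs_nodes l n) (ebs_sched l n) (ebs_R l n) r
       \<and> max_latency_le (ebs_nodes l n) (ebs_R l n) (1 / r * (real (n ^ l) powr (2 * r) - 1)))"
proof -
  interpret ebs_design l n
    using assms by unfold_locales
  have "1 \<le> n"
    using assms by simp
  show ?thesis
    using ebs_oblivious_routing_scheme ebs_guarantees_throughput ebs_max_latency
      rate_eq_inverse_order[OF assms(1) \<open>1 \<le> n\<close>] rate_latency_bound_eq[OF assms(1) \<open>1 \<le> n\<close>]
    by auto
qed

end
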